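(* Let $k\geq 2$ be an integer and let $f\colon\mathbb{N}_0\to\{0,1\}$ be given by $f(n)=\lfloor\sqrt{n}\rfloor \bmod 2$. Then $f$ is not asymptotically $k$-automatic.
   Context: $\mathbb{N}_0=\{0,1,2,\dots\}$. A property holds for almost all $n\in\mathbb{N}_0$ if the set of $n$ where it fails has upper density $\limsup_{N\to\infty}|\cdot\cap\{0,\dots,N-1\}|/N$ equal to $0$. Sequences $f,g$ are asymptotically equal, $f\simeq g$, if $f(n)=g(n)$ for almost all $n$. The $k$-kernel of $f$ is $\mathcal{N}_k(f) = \{ n \mapsto f(k^\alpha n + r) : \alpha, r \in \mathbb{N}_0,\ r < k^\alpha\}$; $f$ is asymptotically $k$-automatic if $\mathcal{N}_k(f)/{\simeq}$ is finite. *)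

theory Defs
  imports "HOL-Analysis.Analysis"
begin

definition upper_density :: "nat set \<Rightarrow> ereal" where
  "upper_density A = limsup (\<lambda>N. ereal (real (card (A \<inter> {0..<N})) / real N))"

definition almost_all :: "(nat \<Rightarrow> bool) \<Rightarrow> bool" where
  "almost_all P \<longleftrightarrow> upper_density {n. \<not> P n} = 0"

definition asymp_eq :: "(nat \<Rightarrow> 'a) \<Rightarrow> (nat \<Rightarrow> 'a) \<Rightarrow> bool" where
  "asymp_eq f g \<longleftrightarrow> almost_all (\<lambda>n. f n = g n)"

definition asymp_eq_rel :: "((nat \<Rightarrow> 'a) \<times> (nat \<Rightarrow> 'a)) set" where
  "asymp_eq_rel = {(f, g). asymp_eq f g}"

definition kernel :: "nat \<Rightarrow> (nat \<Rightarrow> 'a) \<Rightarrow> (nat \<Rightarrow> 'a) set" where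
  "kernel k f = {(\<lambda>n. f (k ^ \<alpha> * n + r)) | \<alpha> r. r < k ^ \<alpha>}"

definition asymp_automatic :: "nat \<Rightarrow> (nat \<Rightarrow> 'a) \<Rightarrow> bool" where
  "asymp_automatic k f \<longleftrightarrow> finite (kernel k f // asymp_eq_rel)"

end

theory Submission
  imports Defs
begin

text \<open>Let \<open>f n = \<lfloor>\<surd>n\<rfloor> mod 2\<close> and take \<open>a < b\<close>, \<open>K = k\<^sup>a\<close>, \<open>M = k\<^bsup>b-a\<^esup>\<close>, \<open>L = K M\<close>.
  For \<open>n = L\<^sup>2 t\<^sup>2 + e\<close> with \<open>2t < e < 4t\<close> one has \<open>\<lfloor>\<surd>(L\<^sup>2 n)\<rfloor> = L\<^sup>2 t + 1\<close> and
  \<open>\<lfloor>\<surd>(K\<^sup>2 n)\<rfloor> = K\<^sup>2 M t\<close>, numbers of opposite parity because \<open>M\<^sup>2 \<equiv> M (mod 2)\<close>.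
  These \<open>n\<close> have upper density at least \<open>1/(4L\<^sup>2)\<close>, so the kernel elements
  \<open>n \<mapsto> f (k\<^bsup>2a\<^esup> n)\<close>, \<open>a \<in> \<nat>\<close>, lie in pairwise different asymptotic classes.\<close>

lemma floor_sqrt_of_nat_eqI:
  fixes m j :: nat
  assumes "j^2 \<le> m" "m < (j + 1)^2"
  shows "\<lfloor>sqrt (real m)\<rfloor> = int j"
proof -
  have "real j ^ 2 \<le> real m" using assms(1) by (metis of_nat_le_iff of_nat_power)
  moreover have "real m < (real j + 1) ^ 2"
    using assms(2) by (metis of_nat_1 of_nat_add of_nat_less_iff of_nat_power)
  ultimately have "real j \<le> sqrt (real m)" "sqrt (real m) < real j + 1"
    by (simp_all add: real_le_rsqrt real_less_lsqrt)
  then show ?thesis by (simp add: floor_eq_iff)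
qed

lemma floor_sqrt_scaled_window:
  fixes L t e :: nat
  assumes "L \<ge> 1" "2*t < e" "e < 4*t"
  shows "\<lfloor>sqrt (real (L^2 * (L^2*t^2 + e)))\<rfloor> = int (L^2*t + 1)"
proof (rule floor_sqrt_of_nat_eqI)
  have "L^2 * (2*t + 1) \<le> L^2 * e" "L^2 * e < L^2 * (4*t)"
    using assms by (intro mult_le_mono2 mult_less_mono2; simp)+
  moreover have "1 \<le> L^2" using assms by simp
  moreover have "L^2 * (L^2*t^2 + e) = L^2 * (L^2*t^2) + L^2 * e"
    "L^2 * (2*t + 1) = L^2 * (2*t) + L^2"
    "(L^2*t + 1)^2 = L^2 * (L^2*t^2) + L^2 * (2*t) + 1"
    "(L^2*t + 1 + 1)^2 = L^2 * (L^2*t^2) + L^2 * (4*t) + 4"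
    by (simp_all add: power2_eq_square algebra_simps)
  ultimately show "(L^2*t + 1)^2 \<le> L^2 * (L^2*t^2 + e)"
    and "L^2 * (L^2*t^2 + e) < (L^2*t + 1 + 1)^2"
    by linarith+
qed

lemma floor_sqrt_scaled_below_window:
  fixes K M t e :: nat
  assumes "e < 2*M*t"
  shows "\<lfloor>sqrt (real (K^2 * ((K*M)^2*t^2 + e)))\<rfloor> = int (K^2*M*t)"
proof (rule floor_sqrt_of_nat_eqI)
  show "(K^2*M*t)^2 \<le> K^2 * ((K*M)^2*t^2 + e)"
    by (simp add: power2_eq_square algebra_simps)
  have "K^2 * e \<le> K^2 * (2*M*t)" using assms by (intro mult_le_mono2) simp
  moreover have "K^2 * ((K*M)^2*t^2 + e) = K^2 * ((K*M)^2*t^2) + K^2 * e"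
    "(K^2*M*t + 1)^2 = K^2 * ((K*M)^2*t^2) + K^2 * (2*M*t) + 1"
    by (simp_all add: power2_eq_square algebra_simps)
  ultimately show "K^2 * ((K*M)^2*t^2 + e) < (K^2*M*t + 1)^2"
    by linarith
qed

lemma floor_sqrt_parity_differs:
  fixes K M t e :: nat
  assumes "K \<ge> 1" "M \<ge> 2" "2*t < e" "e < 4*t"
  defines "n \<equiv> (K*M)^2*t^2 + e"
  shows "\<lfloor>sqrt (real (K^2 * n))\<rfloor> mod 2 \<noteq> \<lfloor>sqrt (real ((K*M)^2 * n))\<rfloor> mod (2::int)"
proof -
  have "4*t \<le> 2*M*t" using assms by simp
  then have "e < 2*M*t" using assms by linarith
  then have below: "\<lfloor>sqrt (real (K^2 * n))\<rfloor> = int (K^2*M*t)"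
    unfolding n_def by (rule floor_sqrt_scaled_below_window)
  have above: "\<lfloor>sqrt (real ((K*M)^2 * n))\<rfloor> = int ((K*M)^2*t + 1)"
    unfolding n_def using assms by (intro floor_sqrt_scaled_window) (simp_all add: Suc_le_eq)
  have "even (K^2*M*t) \<longleftrightarrow> even ((K*M)^2*t)" by simp
  then have "(K^2*M*t) mod 2 \<noteq> ((K*M)^2*t + 1) mod 2" by presburger
  then have "int (K^2*M*t) mod 2 \<noteq> int ((K*M)^2*t + 1) mod 2"
    by (metis of_nat_eq_iff zmod_int of_nat_numeral)
  then show ?thesis unfolding below above .
qed

lemma card_quadratic_windows_ge:
  fixes c T :: nat and D :: "nat set"
  assumes "c \<ge> 2" and windows: "\<And>t e. 2*t < e \<Longrightarrow> e < 4*t \<Longrightarrow> c*t^2 + e \<in> D"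
  shows "T^2 \<le> card (D \<inter> {0..<4*c*T^2})"
proof -
  define A where "A = {T..<2*T} \<times> {1..T}"
  define \<phi> where "\<phi> = (\<lambda>(t, d). c*t^2 + 2*t + d)"
  have below_next: "\<phi> (t, d) < c*(t+1)^2" if "d \<le> t" for t d
  proof -
    have "c*(t+1)^2 = c*t^2 + c*(2*t) + c" by (simp add: power2_eq_square algebra_simps)
    moreover have "4*t \<le> c*(2*t)" using assms(1) by simp
    moreover have "\<phi> (t, d) = c*t^2 + 2*t + d" unfolding \<phi>_def by simp
    ultimately show ?thesis using that assms(1) by linarith
  qed
  have \<phi>_less: "\<phi> (t, d) < \<phi> (t', d')" if "d \<le> t" "t < t'" for t d t' d'
  proof -
    have "\<phi> (t, d) < c*(t+1)^2" using below_next that(1) .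
    also have "\<dots> \<le> c*t'^2" using that(2) by (intro mult_le_mono2 power_mono) auto
    also have "\<dots> \<le> \<phi> (t', d')" unfolding \<phi>_def by simp
    finally show ?thesis .
  qed
  have "inj_on \<phi> A"
  proof (rule inj_onI, clarify)
    fix t d t' d' assume "(t, d) \<in> A" "(t', d') \<in> A" and eq: "\<phi> (t, d) = \<phi> (t', d')"
    then have "d \<le> t" "d' \<le> t'" unfolding A_def by auto
    then have "t = t'" using eq \<phi>_less by (metis less_irrefl linorder_neqE_nat)
    then show "t = t' \<and> d = d'" using eq unfolding \<phi>_def by simp
  qed
  moreover have "\<phi> ` A \<subseteq> D \<inter> {0..<4*c*T^2}"
  proof clarify
    fix t d assume "(t, d) \<in> A"
    then have td: "T \<le> t" "t < 2*T" "1 \<le> d" "d \<le> T" unfolding A_def by auto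
    have "\<phi> (t, d) = c*t^2 + (2*t + d)" unfolding \<phi>_def by simp
    also have "\<dots> \<in> D" using td by (intro windows) auto
    finally have "\<phi> (t, d) \<in> D" .
    moreover have "\<phi> (t, d) < c*(t+1)^2" using td by (intro below_next) simp
    moreover have "c*(t+1)^2 \<le> c*(2*T)^2" using td by (intro mult_le_mono2 power_mono) auto
    ultimately show "\<phi> (t, d) \<in> D \<inter> {0..<4*c*T^2}" by (simp add: power2_eq_square)
  qed
  ultimately have "card A \<le> card (D \<inter> {0..<4*c*T^2})" by (intro card_inj_on_le) auto
  then show ?thesis unfolding A_def by (simp add: card_cartesian_product power2_eq_square)
qed

lemma upper_density_ge_subseq:
  fixes A :: "nat set" and r :: "nat \<Rightarrow> nat"
  assumes "strict_mono r" and "\<And>T. c \<le> real (card (A \<inter> {0..<r T})) / real (r T)"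
  shows "ereal c \<le> upper_density A"
proof -
  define X where "X = (\<lambda>N. ereal (real (card (A \<inter> {0..<N})) / real N))"
  have "ereal c \<le> limsup (X \<circ> r)" by (rule le_Limsup) (simp_all add: X_def assms(2))
  also have "\<dots> \<le> limsup X" by (rule limsup_subseq_mono[OF assms(1)])
  finally show ?thesis unfolding upper_density_def X_def .
qed

lemma upper_density_pos_if_quadratic_windows:
  fixes c :: nat and D :: "nat set"
  assumes "c \<ge> 2" and "\<And>t e. 2*t < e \<Longrightarrow> e < 4*t \<Longrightarrow> c*t^2 + e \<in> D"
  shows "upper_density D > 0"
proof -
  have "ereal (1 / (4*c)) \<le> upper_density D"
  proof (rule upper_density_ge_subseq)
    show "strict_mono (\<lambda>T. 4*c*(T+1)^2)"
      using assms(1) by (intro strict_monoI mult_strict_left_mono power_strict_mono) auto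
    fix T
    have "(T+1)^2 \<le> card (D \<inter> {0..<4*c*(T+1)^2})"
      by (rule card_quadratic_windows_ge[OF assms])
    then have "real ((T+1)^2) \<le> real (card (D \<inter> {0..<4*c*(T+1)^2}))"
      by (simp only: of_nat_le_iff)
    then show "1 / (4*c) \<le> real (card (D \<inter> {0..<4*c*(T+1)^2})) / real (4*c*(T+1)^2)"
      using assms(1) by (simp add: field_simps)
  qed
  then show ?thesis using assms(1) by (simp add: less_le_trans[rotated])
qed

lemma upper_density_empty [simp]: "upper_density {} = 0"
  by (simp add: upper_density_def Limsup_const)

lemma asymp_eq_refl: "asymp_eq f f"
  by (simp add: asymp_eq_def almost_all_def)

lemma infinite_quotient_if_unrelated_family:
  fixes g :: "nat \<Rightarrow> 'a"
  assumes "range g \<subseteq> A" and "\<And>a. (g a, g a) \<in> r" and "\<And>a b. a < b \<Longrightarrow> (g a, g b) \<notin> r"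
  shows "infinite (A // r)"
proof -
  have "inj (\<lambda>a. r `` {g a})"
  proof (rule injI)
    fix a b assume "r `` {g a} = r `` {g b}"
    then have "(g a, g b) \<in> r" "(g b, g a) \<in> r" using assms(2) by blast+
    then show "a = b" using assms(3) by (metis linorder_neqE_nat)
  qed
  moreover have "range (\<lambda>a. r `` {g a}) \<subseteq> A // r" using assms(1) by (auto intro: quotientI)
  ultimately show ?thesis by (meson finite_subset range_inj_infinite)
qed

theorem proposition5p1:
  fixes k :: nat
  assumes "k \<ge> 2"
  shows "\<not> asymp_automatic k (\<lambda>n::nat. (\<lfloor>sqrt (real n)\<rfloor> mod 2 :: int))"
proof -
  define f :: "nat \<Rightarrow> int" where "f = (\<lambda>n. \<lfloor>sqrt (real n)\<rfloor> mod 2)"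
  define g where "g a = (\<lambda>n. f (k^(2*a) * n))" for a
  have "g a \<in> kernel k f" for a
    unfolding kernel_def g_def using assms by (intro CollectI exI[of _ "2*a"] exI[of _ 0]) simp
  then have "range g \<subseteq> kernel k f" by auto
  moreover have "(g a, g a) \<in> asymp_eq_rel" for a
    by (simp add: asymp_eq_rel_def asymp_eq_refl)
  moreover have "(g a, g b) \<notin> asymp_eq_rel" if "a < b" for a b
  proof -
    have "upper_density {n. g a n \<noteq> g b n} > 0"
    proof (rule upper_density_pos_if_quadratic_windows)
      define K M where "K = k^a" and "M = k^(b-a)"
      have "k \<le> k^(2*b)" "k \<le> M" unfolding M_def using assms that by (intro self_le_power; simp)+
      then have "k^(2*b) \<ge> 2" and M: "M \<ge> 2" using assms by linarith+
      then show "k^(2*b) \<ge> 2" by blast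
      have K: "K \<ge> 1" unfolding K_def using assms by simp
      have scale: "k^(2*a) = K^2" "k^(2*b) = (K*M)^2"
        unfolding K_def M_def using that by (simp_all flip: power_add power_mult add: mult.commute)
      show "k^(2*b)*t^2 + e \<in> {n. g a n \<noteq> g b n}" if "2*t < e" "e < 4*t" for t e
        using floor_sqrt_parity_differs[OF K M that] unfolding g_def f_def scale by simp
    qed
    then show ?thesis by (simp add: asymp_eq_rel_def asymp_eq_def almost_all_def)
  qed
  ultimately have "infinite (kernel k f // asymp_eq_rel)"
    by (rule infinite_quotient_if_unrelated_family)
  then show ?thesis unfolding asymp_automatic_def f_def .
qed

end
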